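(* The map $\mathcal L:\mathcal X_M\to\mathcal X_\Lambda$, $\mathcal L(f)(\theta)=\log f(\theta)$ (with $\log\infty=\infty$), is continuous when both spaces carry $\tau_{AW}$.
   Context: For a probability measure $\nu$ let $f_\nu(\theta)=\int e^{\theta x}\nu(dx)\in(0,\infty]$. For $f:\mathbb R\to[-\infty,\infty]$, $\mathrm{epi}(f)=\{(\theta,b):b\ge f(\theta)\}$. On $\mathbb R^2$ use the box metric $d(x,y)=\max(|x_1-y_1|,|x_2-y_2|)$, $d(x,A)=\inf_{y\in A}d(x,y)$, $\overline B_k=\{x:d(0,x)\le k\}$. The Attouch–Wets topology $\tau_{AW}$ has local base at $f$ given by $V_k(f)=\{g:\sup_{x\in\overline B_k}|d(x,\mathrm{epi}(g))-d(x,\mathrm{epi}(f))|<1/k\}$, $k\in\mathbb N$. $\mathcal X_M$ = lower semicontinuous convex $f:\mathbb R\to(0,\infty]$ with $f(0)<\infty$ for which some probability measure $\nu$ satisfies $f(\theta)=f_\nu(\theta)$ whenever $f(\theta)<\infty$; $\mathcal X_\Lambda=\{\log g:g\in\mathcal X_M\}$. *)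

theory Defs
  imports "HOL-Probability.Probability"
begin

definition mgf :: "real measure \<Rightarrow> real \<Rightarrow> ereal" where
  "mgf \<nu> \<theta> = enn2ereal (\<integral>\<^sup>+ x. ennreal (exp (\<theta> * x)) \<partial>\<nu>)"

definition lsc_fun :: "(real \<Rightarrow> ereal) \<Rightarrow> bool" where
  "lsc_fun f \<longleftrightarrow> (\<forall>x. f x \<le> Liminf (at x) f)"

(* convexity of an extended-real valued function (values never -infinity here) *)
definition convex_efun :: "(real \<Rightarrow> ereal) \<Rightarrow> bool" where
  "convex_efun f \<longleftrightarrow> (\<forall>x y t. 0 \<le> t \<and> t \<le> 1 \<longrightarrow>
      f ((1 - t) * x + t * y) \<le> ereal (1 - t) * f x + ereal t * f y)"

definition XM :: "(real \<Rightarrow> ereal) set" where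
  "XM = {f. lsc_fun f \<and> convex_efun f \<and> (\<forall>\<theta>. 0 < f \<theta>) \<and> f 0 < \<infinity> \<and>
            (\<exists>\<nu>. prob_space \<nu> \<and> sets \<nu> = sets borel \<and>
                 (\<forall>\<theta>. f \<theta> < \<infinity> \<longrightarrow> f \<theta> = mgf \<nu> \<theta>))}"

definition elog :: "ereal \<Rightarrow> ereal" where
  "elog y = (if y = \<infinity> then \<infinity> else ereal (ln (real_of_ereal y)))"

definition Lmap :: "(real \<Rightarrow> ereal) \<Rightarrow> (real \<Rightarrow> ereal)" where
  "Lmap f = (\<lambda>\<theta>. elog (f \<theta>))"

definition XLambda :: "(real \<Rightarrow> ereal) set" where
  "XLambda = Lmap ` XM"

definition epi :: "(real \<Rightarrow> ereal) \<Rightarrow> (real \<times> real) set" where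
  "epi f = {(\<theta>, b). f \<theta> \<le> ereal b}"

definition boxdist :: "real \<times> real \<Rightarrow> real \<times> real \<Rightarrow> real" where
  "boxdist x y = max \<bar>fst x - fst y\<bar> \<bar>snd x - snd y\<bar>"

(* distance to a set, infinity for the empty set *)
definition setdist_box :: "real \<times> real \<Rightarrow> (real \<times> real) set \<Rightarrow> ereal" where
  "setdist_box x A = (INF y\<in>A. ereal (boxdist x y))"

definition boxball :: "real \<Rightarrow> (real \<times> real) set" where
  "boxball k = {x. boxdist (0, 0) x \<le> k}"

definition AW_nbhd :: "nat \<Rightarrow> (real \<Rightarrow> ereal) \<Rightarrow> (real \<Rightarrow> ereal) set" where
  "AW_nbhd k f = {g. (SUP x\<in>boxball (real k).
       \<bar>setdist_box x (epi g) - setdist_box x (epi f)\<bar>) < ereal (1 / real k)}"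

end

theory Submission
  imports Defs
begin

text \<open>The substitution \<open>(\<theta>, b) \<mapsto> (\<theta>, exp b)\<close> carries the epigraph of \<open>log g\<close> onto
  that of \<open>g\<close>. Distances from points of the box of radius \<open>k\<close> to the epigraph of \<open>log g\<close> are
  realised at heights \<open>|b| \<le> 2k + 1\<close>, where the inverse substitution magnifies box distances by at
  most \<open>2 exp (2k + 1)\<close>. So if the epigraphs of \<open>f\<close> and \<open>g\<close> are \<open>1/m\<close>-close on the box of
  radius \<open>m \<ge> 4k exp (2k + 1)\<close>, those of \<open>log f\<close> and \<open>log g\<close> are \<open>1/(2k)\<close>-close on the box of
  radius \<open>k\<close>. The normalisation \<open>f 0 = 1\<close> puts \<open>(0, 0)\<close> in every such log-epigraph, which keeps all
  these distances finite.\<close>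

lemma boxdist_triangle: "boxdist x z \<le> boxdist x y + boxdist y z"
  unfolding boxdist_def by (simp add: max_def abs_if split: if_splits)

lemma setdist_box_le: "y \<in> A \<Longrightarrow> setdist_box x A \<le> ereal (boxdist x y)"
  unfolding setdist_box_def by (rule INF_lower)

lemma boxdist_nonneg: "0 \<le> boxdist x y"
  by (simp add: boxdist_def)

lemma setdist_box_nonneg: "0 \<le> setdist_box x A"
  unfolding setdist_box_def using boxdist_nonneg by (simp add: INF_greatest)

lemma setdist_box_less_iff: "setdist_box x A < ereal r \<longleftrightarrow> (\<exists>y\<in>A. boxdist x y < r)"
  unfolding setdist_box_def by (simp add: INF_less_iff)

lemma setdist_box_eq_0: "x \<in> A \<Longrightarrow> setdist_box x A = 0"
  using setdist_box_le[of x A x] setdist_box_nonneg[of x A]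
  by (simp add: boxdist_def zero_ereal_def)

lemma setdist_box_finite: "y \<in> A \<Longrightarrow> \<bar>setdist_box x A\<bar> \<noteq> \<infinity>"
  using setdist_box_le[of y A x] setdist_box_nonneg[of x A] by (cases "setdist_box x A") auto

lemma setdist_box_le_add:
  assumes less: "setdist_box x A < ereal \<rho>"
    and near: "\<And>y. y \<in> A \<Longrightarrow> boxdist x y < \<rho> \<Longrightarrow> \<exists>z\<in>B. boxdist y z \<le> \<delta>"
  shows "setdist_box x B \<le> setdist_box x A + ereal \<delta>"
proof -
  obtain a where a: "setdist_box x A = ereal a"
    using less setdist_box_nonneg[of x A] by (cases "setdist_box x A") auto
  show ?thesis
  proof (rule ereal_le_epsilon2)
    fix \<eta> :: real assume "0 < \<eta>"
    then have "setdist_box x A < ereal (min (a + \<eta>) \<rho>)" using a less by simp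
    then obtain y where y: "y \<in> A" "boxdist x y < min (a + \<eta>) \<rho>"
      using setdist_box_less_iff by blast
    then obtain z where z: "z \<in> B" "boxdist y z \<le> \<delta>" using near by fastforce
    have "setdist_box x B \<le> ereal (boxdist x z)" by (rule setdist_box_le[OF z(1)])
    also have "\<dots> \<le> ereal (boxdist x y + boxdist y z)" using boxdist_triangle by simp
    also have "\<dots> \<le> setdist_box x A + ereal \<delta> + ereal \<eta>" using y z a by simp
    finally show "setdist_box x B \<le> setdist_box x A + ereal \<delta> + ereal \<eta>" .
  qed
qed

lemma ereal_abs_diff_le:
  fixes u v :: ereal
  assumes "\<bar>u\<bar> \<noteq> \<infinity>" "\<bar>v\<bar> \<noteq> \<infinity>" "u \<le> v + ereal \<delta>" "v \<le> u + ereal \<delta>"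
  shows "\<bar>u - v\<bar> \<le> ereal \<delta>"
  using assms by (cases u; cases v) auto

lemma abs_ereal_minus_commute: "\<bar>u - v\<bar> = \<bar>v - u\<bar>" for u v :: ereal
  by (cases u; cases v) auto

lemma AW_nbhd_sym: "g \<in> AW_nbhd k f \<longleftrightarrow> f \<in> AW_nbhd k g"
  unfolding AW_nbhd_def by (simp add: abs_ereal_minus_commute)

lemma AW_nbhd_setdist_box_less:
  assumes "g \<in> AW_nbhd m f" "p \<in> epi g" "p \<in> boxball (real m)"
  shows "setdist_box p (epi f) < ereal (1 / real m)"
proof -
  have "\<bar>setdist_box p (epi g) - setdist_box p (epi f)\<bar>
      \<le> (SUP x\<in>boxball (real m). \<bar>setdist_box x (epi g) - setdist_box x (epi f)\<bar>)"
    by (rule SUP_upper[OF assms(3)])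
  also have "\<dots> < ereal (1 / real m)" using assms(1) by (simp add: AW_nbhd_def)
  finally show ?thesis using setdist_box_eq_0[OF assms(2)] setdist_box_nonneg[of p "epi f"] by simp
qed

lemma ln_le_iff_le_exp: "0 < (x::real) \<Longrightarrow> ln x \<le> y \<longleftrightarrow> x \<le> exp y"
  using ln_le_cancel_iff[of x "exp y"] by simp

lemma elog_le_ereal_iff: "0 < v \<Longrightarrow> elog v \<le> ereal b \<longleftrightarrow> v \<le> ereal (exp b)"
proof (cases v)
  case (real r)
  moreover assume "0 < v"
  ultimately show ?thesis by (simp add: elog_def ln_le_iff_le_exp)
qed (auto simp: elog_def)

lemma mem_epi_Lmap_iff: "0 < f \<theta> \<Longrightarrow> (\<theta>, b) \<in> epi (Lmap f) \<longleftrightarrow> (\<theta>, exp b) \<in> epi f"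
  by (simp add: epi_def Lmap_def elog_le_ereal_iff)

lemma zero_mem_epi_Lmap: "f 0 = 1 \<Longrightarrow> (0, 0) \<in> epi (Lmap f)"
  by (simp add: epi_def Lmap_def elog_def)

lemma ln_sub_ln_le: "0 < (a::real) \<Longrightarrow> 0 < c \<Longrightarrow> ln c - ln a \<le> (c - a) / a"
  using ln_le_minus_one[of "c / a"] by (simp add: ln_div diff_divide_distrib)

lemma abs_ln_sub_le:
  fixes b c e :: real
  assumes close: "\<bar>c - exp b\<bar> \<le> e" and small: "e \<le> exp b / 2"
  shows "\<bar>ln c - b\<bar> \<le> 2 * e / exp b"
proof -
  have c: "exp b / 2 \<le> c" using close small by linarith
  moreover have "0 < exp b / 2" by simp
  ultimately have cpos: "0 < c" by linarith
  show ?thesis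
  proof (cases "exp b \<le> c")
    case True
    have "ln c - ln (exp b) \<le> (c - exp b) / exp b" using cpos by (intro ln_sub_ln_le) auto
    also have "\<dots> \<le> 2 * e / exp b" using close by (intro divide_right_mono) auto
    finally show ?thesis using True cpos by (simp add: ln_ge_iff)
  next
    case False
    have "ln (exp b) - ln c \<le> (exp b - c) / c" using cpos by (intro ln_sub_ln_le) auto
    also have "\<dots> \<le> e / c" using close cpos by (intro divide_right_mono) auto
    also have "\<dots> \<le> e / (exp b / 2)" using c cpos close by (intro divide_left_mono) auto
    finally have "b - ln c \<le> 2 * e / exp b" by (simp add: mult.commute)
    moreover have "ln c \<le> b" using False cpos ln_le_iff_le_exp by simp
    ultimately show ?thesis by simp
  qed
qed

text \<open>Near height \<open>b\<close> the inverse substitution \<open>ln\<close> magnifies vertical distances by at most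
  \<open>2 / exp b\<close>.\<close>
lemma epi_Lmap_approx:
  assumes fpos: "\<And>t. 0 < f t" and gpos: "\<And>t. 0 < g t"
    and close: "\<And>p. p \<in> epi g \<Longrightarrow> p \<in> boxball r \<Longrightarrow> setdist_box p (epi f) < ereal e"
    and y: "(\<theta>, b) \<in> epi (Lmap g)" and "\<bar>\<theta>\<bar> \<le> r" "exp b \<le> r" and small: "e \<le> exp b / 2"
  shows "\<exists>z\<in>epi (Lmap f). boxdist (\<theta>, b) z \<le> max e (2 * e / exp b)"
proof -
  have "(\<theta>, exp b) \<in> epi g" using y gpos mem_epi_Lmap_iff by blast
  moreover have "(\<theta>, exp b) \<in> boxball r" using assms(5,6) by (simp add: boxball_def boxdist_def)
  ultimately have "setdist_box (\<theta>, exp b) (epi f) < ereal e" by (rule close)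
  then obtain \<theta>' c where z: "(\<theta>', c) \<in> epi f" and "boxdist (\<theta>, exp b) (\<theta>', c) < e"
    by (auto simp: setdist_box_less_iff)
  then have d\<theta>: "\<bar>\<theta> - \<theta>'\<bar> \<le> e" and dc: "\<bar>c - exp b\<bar> \<le> e" by (auto simp: boxdist_def)
  have "0 < exp b / 2" by simp
  then have "0 < c" using dc small by linarith
  then have "(\<theta>', ln c) \<in> epi (Lmap f)" using z fpos mem_epi_Lmap_iff by simp
  moreover have "\<bar>b - ln c\<bar> \<le> 2 * e / exp b" using abs_ln_sub_le[OF dc small] by simp
  ultimately show ?thesis using d\<theta> by (intro bexI[of _ "(\<theta>', ln c)"]) (auto simp: boxdist_def)
qed

lemma Lmap_scale_bounds:
  assumes k: "1 \<le> k" and m: "4 * real k * exp (2 * real k + 1) \<le> real m"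
    and b: "\<bar>b\<bar> \<le> 2 * real k + 1"
  shows "exp (2 * real k + 1) \<le> real m" and "1 / real m \<le> exp b / 2"
    and "max (1 / real m) (2 * (1 / real m) / exp b) \<le> 1 / (2 * real k)"
proof -
  define R where "R = 2 * real k + 1"
  define e where "e = 1 / real m"
  have k_pos: "0 < real k" and R_ge: "1 \<le> exp R" using k by (auto simp: R_def)
  have "exp R \<le> 4 * real k * exp R" using k by simp
  then show m_ge: "exp (2 * real k + 1) \<le> real m" using m unfolding R_def by linarith
  then have m_pos: "0 < real m" using R_ge unfolding R_def by linarith
  have "e * exp R = exp R / real m" by (simp add: e_def)
  also have "\<dots> \<le> exp R / (4 * real k * exp R)"
    using m m_pos k_pos unfolding R_def by (intro divide_left_mono) auto
  finally have eR: "e * exp R \<le> 1 / (4 * real k)" using R_ge by simp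
  have "e / exp b = e * exp (- b)" by (simp add: exp_minus field_simps)
  also have "\<dots> \<le> e * exp R" using b by (intro mult_left_mono) (auto simp: e_def R_def)
  finally have eb: "e / exp b \<le> 1 / (4 * real k)" using eR by linarith
  have "1 / (4 * real k) \<le> 1 / 4" using k by (simp add: divide_simps)
  then have "e / exp b \<le> 1 / 2" using eb by linarith
  then have "e \<le> exp b / 2" by (simp add: field_simps)
  then show "1 / real m \<le> exp b / 2" by (simp add: e_def)
  have "e \<le> e * exp R" using divide_right_mono[OF R_ge, of "real m"] by (simp add: e_def)
  moreover have "1 / (4 * real k) \<le> 1 / (2 * real k)" "2 * (1 / (4 * real k)) = 1 / (2 * real k)"
    using k_pos by (simp_all add: divide_simps)
  ultimately show "max (1 / real m) (2 * (1 / real m) / exp b) \<le> 1 / (2 * real k)"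
    using eR eb unfolding e_def by auto
qed

lemma Lmap_setdist_box_le:
  assumes fpos: "\<And>t. 0 < f t" and gpos: "\<And>t. 0 < g t" and g0: "g 0 = 1"
    and near: "g \<in> AW_nbhd m f" and k: "1 \<le> k"
    and m: "4 * real k * exp (2 * real k + 1) \<le> real m" and x: "x \<in> boxball (real k)"
  shows "setdist_box x (epi (Lmap f)) \<le> setdist_box x (epi (Lmap g)) + ereal (1 / (2 * real k))"
proof (rule setdist_box_le_add)
  have x_bounds: "\<bar>fst x\<bar> \<le> real k" "\<bar>snd x\<bar> \<le> real k"
    using x by (auto simp: boxball_def boxdist_def)
  then have "boxdist x (0, 0) < real k + 1" by (simp add: boxdist_def)
  then show "setdist_box x (epi (Lmap g)) < ereal (real k + 1)"
    using setdist_box_le[OF zero_mem_epi_Lmap[of g, OF g0], of x] by (simp add: le_less_trans)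
  fix y assume y: "y \<in> epi (Lmap g)" "boxdist x y < real k + 1"
  obtain \<theta> b where y_eq: "y = (\<theta>, b)" by (cases y)
  have \<theta>_le: "\<bar>\<theta>\<bar> \<le> 2 * real k + 1" and b_le: "\<bar>b\<bar> \<le> 2 * real k + 1"
    using y(2) x_bounds by (auto simp: y_eq boxdist_def)
  note scale = Lmap_scale_bounds[OF k m b_le]
  have "2 * real k + 1 \<le> exp (2 * real k + 1)" "exp b \<le> exp (2 * real k + 1)"
    using exp_ge_add_one_self[of "2 * real k + 1"] b_le by auto
  then have "\<bar>\<theta>\<bar> \<le> real m" "exp b \<le> real m" using \<theta>_le scale(1) by linarith+
  then have "\<exists>z\<in>epi (Lmap f). boxdist (\<theta>, b) z \<le> max (1 / real m) (2 * (1 / real m) / exp b)"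
    using y(1) scale(2) unfolding y_eq
    by (intro epi_Lmap_approx[where r = "real m", OF fpos gpos AW_nbhd_setdist_box_less[OF near]])
  then show "\<exists>z\<in>epi (Lmap f). boxdist y z \<le> 1 / (2 * real k)"
    using scale(3) unfolding y_eq by (meson order_trans)
qed

lemma Lmap_mem_AW_nbhd:
  assumes fpos: "\<And>t. 0 < f t" and gpos: "\<And>t. 0 < g t" and f0: "f 0 = 1" and g0: "g 0 = 1"
    and near: "g \<in> AW_nbhd m f" and k: "1 \<le> k"
    and m: "4 * real k * exp (2 * real k + 1) \<le> real m"
  shows "Lmap g \<in> AW_nbhd k (Lmap f)"
proof -
  have near': "f \<in> AW_nbhd m g" using near AW_nbhd_sym by blast
  have "\<bar>setdist_box x (epi (Lmap g)) - setdist_box x (epi (Lmap f))\<bar> \<le> ereal (1 / (2 * real k))"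
    if x: "x \<in> boxball (real k)" for x
    by (rule ereal_abs_diff_le[OF setdist_box_finite setdist_box_finite
          Lmap_setdist_box_le[OF gpos fpos f0 near' k m x]
          Lmap_setdist_box_le[OF fpos gpos g0 near k m x]])
       (use zero_mem_epi_Lmap f0 g0 in blast)+
  then have "(SUP x\<in>boxball (real k). \<bar>setdist_box x (epi (Lmap g)) - setdist_box x (epi (Lmap f))\<bar>)
      \<le> ereal (1 / (2 * real k))"
    by (rule SUP_least)
  also have "\<dots> < ereal (1 / real k)" using k by (simp add: divide_simps)
  finally show ?thesis by (simp add: AW_nbhd_def)
qed

lemma XM_pos: "f \<in> XM \<Longrightarrow> 0 < f \<theta>"
  unfolding XM_def by auto

lemma XM_at_0: "f \<in> XM \<Longrightarrow> f 0 = 1"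
proof -
  assume "f \<in> XM"
  then obtain \<nu> where "prob_space \<nu>" "f 0 = mgf \<nu> 0"
    unfolding XM_def by blast
  then show ?thesis by (simp add: mgf_def prob_space.emeasure_space_1 one_ennreal.rep_eq)
qed

theorem mainTheorem10:
  shows "(\<forall>f\<in>XM. Lmap f \<in> XLambda) \<and>
         (\<forall>f\<in>XM. \<forall>k::nat. k \<ge> 1 \<longrightarrow>
            (\<exists>m::nat. m \<ge> 1 \<and>
               (\<forall>g\<in>XM. g \<in> AW_nbhd m f \<longrightarrow> Lmap g \<in> AW_nbhd k (Lmap f))))"
proof (intro conjI ballI allI impI)
  show "Lmap f \<in> XLambda" if "f \<in> XM" for f
    using that unfolding XLambda_def by blast
next
  fix f and k :: nat assume f: "f \<in> XM" and k: "k \<ge> 1"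
  define m where "m = nat \<lceil>4 * real k * exp (2 * real k + 1)\<rceil>"
  have m: "4 * real k * exp (2 * real k + 1) \<le> real m"
    unfolding m_def by (rule real_nat_ceiling_ge)
  moreover have "4 * 1 * 1 \<le> 4 * real k * exp (2 * real k + 1)"
    using k by (intro mult_mono) auto
  ultimately have "m \<ge> 1" by linarith
  moreover have "Lmap g \<in> AW_nbhd k (Lmap f)" if "g \<in> XM" "g \<in> AW_nbhd m f" for g
    using f that by (intro Lmap_mem_AW_nbhd[OF _ _ _ _ _ k m]) (simp_all add: XM_pos XM_at_0)
  ultimately show "\<exists>m::nat. m \<ge> 1 \<and> (\<forall>g\<in>XM. g \<in> AW_nbhd m f \<longrightarrow> Lmap g \<in> AW_nbhd k (Lmap f))"
    by blast
qed

end
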